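(* Let $D_1$ be an $m\times m$ Euclidean distance matrix (EDM) of embedding dimension $r_1$, and let $D_2$ be an $n\times n$ EDM of embedding dimension $r_2$. Then the $mn\times mn$ matrix $D = E_m\otimes D_2 + D_1\otimes E_n$ is an EDM of embedding dimension $r_1+r_2$, where $E_k$ denotes the $k\times k$ matrix of all ones and $\otimes$ denotes the Kronecker product.
   Context: An $N\times N$ matrix $D=(d_{ij})$ is a Euclidean distance matrix (EDM) if there exist points $p^1,\dots,p^N$ in some Euclidean space $\mathbb{R}^s$ with $d_{ij}=\|p^i-p^j\|^2$ for all $i,j$ (Euclidean norm); the dimension of the affine span of these points is called the embedding dimension of $D$. *)

theory Defs
  imports Complex_Main "HOL-Library.Function_Algebras"
begin

text \<open>Square matrices of size N are represented as functions nat => nat => real,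
  only the entries with indices below N are meaningful.
  Points of the Euclidean space R^s are represented as functions nat => real
  vanishing at all coordinates >= s; these form a real vector space under the
  pointwise operations.\<close>

definition fscale :: "real \<Rightarrow> (nat \<Rightarrow> real) \<Rightarrow> (nat \<Rightarrow> real)" where
  "fscale c f = (\<lambda>t. c * f t)"

definition affine_span_dim :: "nat \<Rightarrow> (nat \<Rightarrow> nat \<Rightarrow> real) \<Rightarrow> nat" where
  "affine_span_dim N p = vector_space.dim fscale {p i - p 0 | i. i < N}"

definition is_EDM :: "nat \<Rightarrow> (nat \<Rightarrow> nat \<Rightarrow> real) \<Rightarrow> nat \<Rightarrow> bool" where
  "is_EDM N D r \<longleftrightarrow>
     (\<exists>(s::nat) (p::nat \<Rightarrow> nat \<Rightarrow> real).
        (\<forall>i<N. \<forall>t\<ge>s. p i t = 0) \<and>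
        (\<forall>i<N. \<forall>j<N. D i j = (\<Sum>t<s. (p i t - p j t)^2)) \<and>
        affine_span_dim N p = r)"

definition ones_mat :: "nat \<Rightarrow> nat \<Rightarrow> real" where
  "ones_mat i j = 1"

text \<open>Kronecker product A (x) B where B is n x n: the entry in row i*n+k and
  column j*n+l (k,l < n) is A i j * B k l.\<close>
definition kron :: "nat \<Rightarrow> (nat \<Rightarrow> nat \<Rightarrow> real) \<Rightarrow> (nat \<Rightarrow> nat \<Rightarrow> real) \<Rightarrow> nat \<Rightarrow> nat \<Rightarrow> real" where
  "kron n A B a b = A (a div n) (b div n) * B (a mod n) (b mod n)"

end

theory Submission
  imports Defs
begin

text \<open>Realise D1 by points p1 i in the first s1 coordinates and D2 by points p2 k shifted into
  the coordinates beyond s1. The point p1 i + shift_right s1 (p2 k), indexed by i * n + k, has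
  squared distances D1 i j + D2 k l to the others by Pythagoras, and the differences of the new
  points span the direct sum of the two (coordinate-disjoint) difference spans, of dimension
  r1 + r2.\<close>

interpretation V: vector_space fscale
  by unfold_locales (auto simp: fscale_def fun_eq_iff algebra_simps)

lemma (in vector_space) independent_Un:
  assumes "independent A" and "independent B" and "finite B"
    and "span A \<inter> span B = {0}"
  shows "independent (A \<union> B)"
proof -
  have "independent (A \<union> C)" if "C \<subseteq> B" for C
    using finite_subset[OF that \<open>finite B\<close>] that
  proof (induction C rule: finite_induct)
    case empty
    then show ?case using assms(1) by simp
  next
    case (insert b C)
    have "b \<notin> span (A \<union> C)"
    proof
      assume "b \<in> span (A \<union> C)"
      then obtain x y where xy: "b = x + y" "x \<in> span A" "y \<in> span C"
        unfolding span_Un by blast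
      have "y \<in> span B" using xy(3) insert.prems span_mono by blast
      moreover have "b \<in> span B" using insert.prems span_superset by blast
      ultimately have "x \<in> span B" using xy(1) span_diff[of b B y] by simp
      then have "x = 0" using xy(2) assms(4) by blast
      then have "b \<in> span (B - {b})"
        using xy insert.hyps(2) insert.prems span_mono[of C "B - {b}"] by auto
      then show False using assms(2) insert.prems by (auto simp: dependent_def)
    qed
    then show ?case using insert by (simp add: independent_insertI)
  qed
  then show ?thesis by blast
qed

definition shift_right :: "nat \<Rightarrow> (nat \<Rightarrow> real) \<Rightarrow> nat \<Rightarrow> real" where
  "shift_right s v = (\<lambda>t. if t < s then 0 else v (t - s))"

lemma shift_right_add_apply [simp]: "shift_right s v (t + s) = v t"
  by (simp add: shift_right_def)

lemma shift_right_diff: "shift_right s v - shift_right s w = shift_right s (v - w)"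
  by (auto simp: shift_right_def fun_eq_iff)

lemma shift_right_zero [simp]: "shift_right s 0 = 0"
  by (simp add: shift_right_def fun_eq_iff)

lemma module_hom_shift_right: "module_hom fscale fscale (shift_right s)"
  by unfold_locales (auto simp: shift_right_def fscale_def fun_eq_iff)

lemma inj_shift_right: "inj (shift_right s)"
proof (rule injI)
  fix v w assume "shift_right s v = shift_right s w"
  then have "shift_right s v (t + s) = shift_right s w (t + s)" for t by simp
  then show "v = w" by (simp add: fun_eq_iff)
qed

lemma span_vanishing_from:
  assumes "\<And>u t. u \<in> S \<Longrightarrow> s \<le> t \<Longrightarrow> u t = 0" and "x \<in> V.span S" and "s \<le> t"
  shows "x t = 0"
proof -
  have "V.subspace {v. \<forall>t\<ge>s. v t = 0}"
    by (auto simp: V.subspace_def fscale_def)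
  then have "V.span S \<subseteq> {v. \<forall>t\<ge>s. v t = 0}"
    using assms(1) by (intro V.span_minimal) auto
  then show ?thesis using assms(2,3) by blast
qed

lemma span_disjoint_shift_right:
  assumes "\<And>u t. u \<in> S \<Longrightarrow> s \<le> t \<Longrightarrow> u t = 0"
  shows "V.span S \<inter> V.span (shift_right s ` T) = {0}"
proof -
  have "x = 0" if x_S: "x \<in> V.span S" and x_T: "x \<in> V.span (shift_right s ` T)" for x
  proof
    fix t
    obtain w where "x = shift_right s w"
      using x_T module_hom.span_image[OF module_hom_shift_right] by auto
    then show "x t = 0 t"
      using span_vanishing_from[of S s x t] assms x_S by (cases "t < s") (auto simp: shift_right_def)
  qed
  then show ?thesis by (auto simp: V.span_zero)
qed

lemma dim_Un_shift_right:
  assumes "finite S" and "finite T" and "\<And>u t. u \<in> S \<Longrightarrow> s \<le> t \<Longrightarrow> u t = 0"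
  shows "V.dim (S \<union> shift_right s ` T) = V.dim S + V.dim T"
proof -
  obtain A where A: "A \<subseteq> S" "V.independent A" "S \<subseteq> V.span A" "card A = V.dim S"
    using V.basis_exists by blast
  obtain B where B: "B \<subseteq> T" "V.independent B" "T \<subseteq> V.span B" "card B = V.dim T"
    using V.basis_exists by blast
  let ?B = "shift_right s ` B"
  have "finite A" "finite B" using A(1) B(1) assms(1,2) finite_subset by blast+
  have inj: "inj_on (shift_right s) X" for X
    using inj_shift_right by (rule inj_on_subset) simp
  have span_B: "V.span ?B = shift_right s ` V.span B"
    using module_hom.span_image[OF module_hom_shift_right] .
  have independent_B: "V.independent ?B"
    using module_hom.independent_injective_image[OF module_hom_shift_right B(2) inj] .
  have disjoint: "V.span A \<inter> V.span ?B = {0}"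
    using A(1) assms(3) by (intro span_disjoint_shift_right) auto
  have independent: "V.independent (A \<union> ?B)"
    using V.independent_Un[OF A(2) independent_B _ disjoint] \<open>finite B\<close> by simp
  have "A \<inter> ?B = {}"
  proof (rule equals0I)
    fix x assume x: "x \<in> A \<inter> ?B"
    then have "x \<in> V.span A \<inter> V.span ?B"
      using V.span_base[of x A] V.span_base[of x ?B] by simp
    then have "x = 0" using disjoint by simp
    then show False using x A(2) V.dependent_zero by simp
  qed
  then have "card (A \<union> ?B) = card A + card B"
    using \<open>finite A\<close> \<open>finite B\<close> by (simp add: card_Un_disjoint card_image[OF inj])
  moreover have "S \<subseteq> V.span (A \<union> ?B)"
    using A(3) V.span_mono[of A "A \<union> ?B"] by blast
  moreover have "shift_right s ` T \<subseteq> V.span (A \<union> ?B)"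
    using B(3) span_B V.span_mono[of ?B "A \<union> ?B"] by blast
  moreover have "A \<union> ?B \<subseteq> S \<union> shift_right s ` T" using A(1) B(1) by blast
  ultimately show ?thesis
    using V.basis_card_eq_dim[OF _ _ independent, of "S \<union> shift_right s ` T"] A(4) B(4) by simp
qed

lemma dim_sums_shift_right:
  assumes "finite S" and "finite T" and "0 \<in> S" and "0 \<in> T"
    and "\<And>u t. u \<in> S \<Longrightarrow> s \<le> t \<Longrightarrow> u t = 0"
  shows "V.dim {u + shift_right s w | u w. u \<in> S \<and> w \<in> T} = V.dim S + V.dim T"
proof -
  let ?W = "{u + shift_right s w | u w. u \<in> S \<and> w \<in> T}"
  let ?U = "S \<union> shift_right s ` T"
  have "?W \<subseteq> V.span ?U"
  proof
    fix x assume "x \<in> ?W"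
    then obtain u w where x: "x = u + shift_right s w" "u \<in> S" "w \<in> T" by blast
    then have "u \<in> V.span ?U" "shift_right s w \<in> V.span ?U" by (simp_all add: V.span_base)
    then show "x \<in> V.span ?U" unfolding x(1) by (rule V.span_add)
  qed
  moreover have "?U \<subseteq> ?W"
  proof
    fix x assume "x \<in> ?U"
    then have "(\<exists>u\<in>S. x = u + shift_right s 0) \<or> (\<exists>w\<in>T. x = 0 + shift_right s w)" by auto
    then show "x \<in> ?W" using assms(3,4) by blast
  qed
  ultimately have span_eq: "V.span ?W = V.span ?U"
    unfolding V.span_eq using V.span_superset by (meson order_trans)
  have "V.dim ?W = V.dim (V.span ?W)" by (rule V.dim_span[symmetric])
  also have "\<dots> = V.dim ?U" unfolding span_eq by (rule V.dim_span)
  also have "\<dots> = V.dim S + V.dim T"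
    using assms(1,2,5) by (rule dim_Un_shift_right)
  finally show ?thesis .
qed

lemma image_div_mod_lessThan:
  assumes "0 < (n::nat)"
  shows "(\<lambda>a. (a div n, a mod n)) ` {..<m * n} = {..<m} \<times> {..<n}"
proof (intro set_eqI iffI)
  fix x assume "x \<in> (\<lambda>a. (a div n, a mod n)) ` {..<m * n}"
  then show "x \<in> {..<m} \<times> {..<n}"
    using assms by (auto simp: less_mult_imp_div_less mult.commute)
next
  fix x assume "x \<in> {..<m} \<times> {..<n}"
  then obtain i k where x: "x = (i, k)" "i < m" "k < n" by blast
  have "i * n + k < m * n"
    by (metis x(2,3) add.commute add_less_cancel_left less_le_trans mult_Suc mult_le_mono1 Suc_leI)
  moreover have "x = ((i * n + k) div n, (i * n + k) mod n)"
    using x(1,3) by simp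
  ultimately show "x \<in> (\<lambda>a. (a div n, a mod n)) ` {..<m * n}" by blast
qed

lemma affine_span_dim_shift_sum:
  assumes "0 < m" and "0 < n" and "\<And>i t. i < m \<Longrightarrow> s \<le> t \<Longrightarrow> p1 i t = 0"
  shows "affine_span_dim (m * n) (\<lambda>a. p1 (a div n) + shift_right s (p2 (a mod n)))
    = affine_span_dim m p1 + affine_span_dim n p2"
proof -
  let ?S = "{p1 i - p1 0 | i. i < m}" and ?T = "{p2 k - p2 0 | k. k < n}"
  let ?q = "\<lambda>a. p1 (a div n) + shift_right s (p2 (a mod n))"
  let ?f = "\<lambda>(i, k). (p1 i - p1 0) + shift_right s (p2 k - p2 0)"
  have "?q a - ?q 0 = ?f (a div n, a mod n)" for a
    by (simp flip: shift_right_diff)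
  then have "{?q a - ?q 0 | a. a < m * n} = (\<lambda>a. ?f (a div n, a mod n)) ` {..<m * n}"
    by auto
  also have "\<dots> = ?f ` (\<lambda>a. (a div n, a mod n)) ` {..<m * n}"
    by (simp only: image_image)
  also have "\<dots> = ?f ` ({..<m} \<times> {..<n})"
    by (simp only: image_div_mod_lessThan[OF assms(2)])
  also have "\<dots> = {u + shift_right s w | u w. u \<in> ?S \<and> w \<in> ?T}" by auto
  finally have "affine_span_dim (m * n) ?q = V.dim {u + shift_right s w | u w. u \<in> ?S \<and> w \<in> ?T}"
    unfolding affine_span_dim_def by (rule arg_cong)
  also have "\<dots> = V.dim ?S + V.dim ?T"
  proof (rule dim_sums_shift_right)
    show "0 \<in> ?S" "0 \<in> ?T" using assms(1,2) by force+
    show "u t = 0" if "u \<in> ?S" "s \<le> t" for u t using that assms(1,3) by force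
  qed simp_all
  finally show ?thesis unfolding affine_span_dim_def .
qed

lemma sum_sq_diff_shift_right:
  assumes "\<And>t. s \<le> t \<Longrightarrow> u t = 0" and "\<And>t. s \<le> t \<Longrightarrow> u' t = 0"
  shows "(\<Sum>t<s + s'. (u t + shift_right s w t - (u' t + shift_right s w' t))^2)
    = (\<Sum>t<s. (u t - u' t)^2) + (\<Sum>t<s'. (w t - w' t)^2)"
proof -
  have split: "(\<Sum>t<s + k. f t) = (\<Sum>t<s. f t) + (\<Sum>t<k. f (t + s))" for f :: "nat \<Rightarrow> real" and k
    by (induction k) (auto simp: add.commute add.left_commute)
  show ?thesis
    using assms by (simp add: split) (simp add: shift_right_def)
qed

theorem theorem4:
  fixes m n r1 r2 :: nat and D1 D2 :: "nat \<Rightarrow> nat \<Rightarrow> real"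
  assumes "0 < m" and "0 < n"
    and "is_EDM m D1 r1" and "is_EDM n D2 r2"
  shows "is_EDM (m * n) (\<lambda>a b. kron n ones_mat D2 a b + kron n D1 ones_mat a b) (r1 + r2)"
proof -
  obtain s1 p1 where p1: "\<forall>i<m. \<forall>t\<ge>s1. p1 i t = 0"
    "\<forall>i<m. \<forall>j<m. D1 i j = (\<Sum>t<s1. (p1 i t - p1 j t)^2)" "affine_span_dim m p1 = r1"
    using assms(3) unfolding is_EDM_def by blast
  obtain s2 p2 where p2: "\<forall>k<n. \<forall>t\<ge>s2. p2 k t = 0"
    "\<forall>k<n. \<forall>l<n. D2 k l = (\<Sum>t<s2. (p2 k t - p2 l t)^2)" "affine_span_dim n p2 = r2"
    using assms(4) unfolding is_EDM_def by blast
  define q where "q a = p1 (a div n) + shift_right s1 (p2 (a mod n))" for a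
  have index: "a div n < m" "a mod n < n" if "a < m * n" for a
    using image_div_mod_lessThan[OF assms(2), of m] that by auto
  have "\<forall>a<m * n. \<forall>t\<ge>s1 + s2. q a t = 0"
    using p1(1) p2(1) index by (auto simp: q_def shift_right_def)
  moreover have "\<forall>a<m * n. \<forall>b<m * n. kron n ones_mat D2 a b + kron n D1 ones_mat a b
      = (\<Sum>t<s1 + s2. (q a t - q b t)^2)"
  proof (intro allI impI)
    fix a b assume "a < m * n" "b < m * n"
    then show "kron n ones_mat D2 a b + kron n D1 ones_mat a b = (\<Sum>t<s1 + s2. (q a t - q b t)^2)"
      using sum_sq_diff_shift_right[where s = s1 and u = "p1 (a div n)" and u' = "p1 (b div n)"
          and s' = s2] p1(1,2) p2(2) index
      by (simp add: q_def kron_def ones_mat_def)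
  qed
  moreover have "affine_span_dim (m * n) q = r1 + r2"
    using affine_span_dim_shift_sum[OF assms(1,2), of s1 p1 p2] p1(1,3) p2(3)
    by (simp add: q_def[abs_def])
  ultimately show ?thesis unfolding is_EDM_def by blast
qed

end
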